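(* Let $\mu_1,\ldots,\mu_n$ be continuous probability measures on $\mathbb{R}^n$ and $\alpha_1,\ldots,\alpha_n\in[0,1]$. Let $S_1,\ldots,S_n\subset\mathbb{R}^n$ satisfy one of the following: (1) $S_1,\ldots,S_n$ are compact, can be separated by hyperplanes, and $\mu_i(S_i)\ge\max\{\alpha_i,1-\alpha_i\}$ for all $i\in[n]$; or (2) $S_1,\ldots,S_n$ are closed, can be separated by hyperplanes, and $\mu_i(S_i)>\max\{\alpha_i,1-\alpha_i\}$ for all $i\in[n]$. Then there exists an oriented hyperplane $H$ such that $\mu_i(H^+)=\alpha_i$ for all $i\in[n]$.
   Context: A continuous probability measure on $\mathbb{R}^n$ is a Borel probability measure absolutely continuous with respect to Lebesgue measure. For an oriented hyperplane $H$, $H^+$ is the closed half-space in the direction of its normal and $H^-$ the other closed half-space; $H^{+1}=H^+$, $H^{-1}=H^-$. Sets $S_1,\ldots,S_n\subset\mathbb{R}^n$ can be separated by hyperplanes if for every function $\sigma:[n]\to\{-1,+1\}$ there is a hyperplane $H$ with $S_i$ contained in the open half-space $\operatorname{int}H^{\sigma(i)}$ for every $i$. *)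

theory Defs
  imports "HOL-Probability.Probability"
begin

definition hplus :: "'a::euclidean_space \<Rightarrow> real \<Rightarrow> 'a set" where
  "hplus a b = {x. a \<bullet> x \<ge> b}"

definition hminus :: "'a::euclidean_space \<Rightarrow> real \<Rightarrow> 'a set" where
  "hminus a b = {x. a \<bullet> x \<le> b}"

definition hside :: "bool \<Rightarrow> 'a::euclidean_space \<Rightarrow> real \<Rightarrow> 'a set" where
  "hside s a b = (if s then hplus a b else hminus a b)"

definition continuous_prob :: "'a::euclidean_space measure \<Rightarrow> bool" where
  "continuous_prob M \<longleftrightarrow> sets M = sets borel \<and> prob_space M \<and> absolutely_continuous lborel M"

definition separable_by_hyperplanes :: "('n \<Rightarrow> 'a::euclidean_space set) \<Rightarrow> bool" where
  "separable_by_hyperplanes S \<longleftrightarrow>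
     (\<forall>\<sigma> :: 'n \<Rightarrow> bool. \<exists>a b. a \<noteq> 0 \<and> (\<forall>i. S i \<subseteq> interior (hside (\<sigma> i) a b)))"

end

theory Submission
  imports Defs
begin

text \<open>Parametrize oriented hyperplanes, degenerate ones included, by \<open>(a, b) \<in> \<real>\<^sup>n \<times> \<real>\<close>.
  Separability yields for every vertex \<open>J\<close> of the cube \<open>[-1,1]\<^sup>n\<close> (coordinate \<open>+1\<close> exactly on \<open>J\<close>)
  a hyperplane \<open>P J\<close> having \<open>S\<^sub>i\<close> strictly on its positive side iff \<open>i \<in> J\<close>. Interpolating
  multilinearly between the \<open>P J\<close> gives a map \<open>\<psi>\<close> from the cube to the parameter space, and since
  the parameters putting \<open>S\<^sub>i\<close> strictly on a given side form a convex set, \<open>\<psi>\<close> maps the face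
  \<open>t\<^sub>i = \<plusminus>1\<close> to hyperplanes with \<open>S\<^sub>i\<close> strictly on the \<open>\<plusminus>\<close> side. The measure hypothesis then makes
  \<open>\<mu>\<^sub>i(H\<^sup>+) - \<alpha>\<^sub>i\<close> nonnegative on \<open>t\<^sub>i = 1\<close> and nonpositive on \<open>t\<^sub>i = -1\<close>, so the Poincare-Miranda
  theorem gives a common zero. For \<open>\<mu>\<^sub>i(H\<^sup>+)\<close> to depend continuously on \<open>\<psi>\<close>, the map \<open>\<psi>\<close> must avoid
  \<open>0\<close>; this is arranged by translating all \<open>P J\<close> by a small generic vector, as the smooth image of
  the \<open>n\<close>-cube is null in the \<open>(n+1)\<close>-dimensional parameter space. A zero with \<open>a = 0\<close> forces all
  \<open>\<alpha>\<^sub>i\<close> to be \<open>0\<close> or all to be \<open>1\<close>, and then a vertex hyperplane works. Closed sets are reduced to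
  compact ones by intersecting with large balls.\<close>

text \<open>Parameters \<open>(a, b)\<close> with \<open>a = 0\<close> are allowed: the interpolation takes place in all of
  \<open>\<real>\<^sup>n \<times> \<real>\<close>.\<close>

definition strictly_on_side :: "bool \<Rightarrow> 'a::euclidean_space set \<Rightarrow> ('a \<times> real) set" where
  "strictly_on_side s S = {(a, b). \<forall>x\<in>S. if s then b < a \<bullet> x else a \<bullet> x < b}"

lemma mem_strictly_on_side:
  "p \<in> strictly_on_side s S \<longleftrightarrow>
     (\<forall>x\<in>S. fst p \<bullet> x - snd p \<in> (if s then {0<..} else {..<0}))"
  by (cases p) (auto simp: strictly_on_side_def)

lemma convex_strictly_on_side: "convex (strictly_on_side s S)"
proof -
  have "strictly_on_side s S =
      (\<Inter>x\<in>S. (\<lambda>p. fst p \<bullet> x - snd p) -` (if s then {0<..} else {..<0}))"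
    by (auto simp: mem_strictly_on_side)
  moreover have "linear (\<lambda>p. fst p \<bullet> x - snd p)" for x :: 'a
    by (auto simp: linear_iff inner_add_left algebra_simps)
  ultimately show ?thesis
    by (auto intro!: convex_INT convex_linear_vimage)
qed

lemma open_strictly_on_side:
  assumes "compact S"
  shows "open (strictly_on_side s S)"
proof (subst open_subopen, intro ballI)
  fix p assume p: "p \<in> strictly_on_side s S"
  define I where "I = (if s then {0<..} else {..<0::real})"
  let ?W = "(\<lambda>z::('a \<times> real) \<times> 'a. fst (fst z) \<bullet> snd z - snd (fst z)) -` I"
  have open_W: "open ?W"
    by (rule open_vimage) (simp add: I_def, intro continuous_intros)
  have sub_W: "{p} \<times> S \<subseteq> ?W"
    using p unfolding mem_strictly_on_side I_def[symmetric] by auto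
  obtain X where X: "p \<in> X" "open X" "X \<times> S \<subseteq> ?W"
    using Elementary_Topology.tube_lemma[OF assms open_W sub_W] by (elim exE conjE)
  have "X \<subseteq> strictly_on_side s S"
  proof
    fix q assume "q \<in> X"
    then have "\<forall>x\<in>S. fst q \<bullet> x - snd q \<in> I"
      using X(3) by auto
    then show "q \<in> strictly_on_side s S"
      unfolding mem_strictly_on_side I_def .
  qed
  with X show "\<exists>X. open X \<and> p \<in> X \<and> X \<subseteq> strictly_on_side s S"
    by blast
qed

lemma separable_by_hyperplanesE:
  fixes S :: "'n \<Rightarrow> 'a::euclidean_space set"
  assumes "separable_by_hyperplanes S"
  obtains P :: "'n set \<Rightarrow> 'a \<times> real"
  where "\<And>J. fst (P J) \<noteq> 0" "\<And>J i. P J \<in> strictly_on_side (i \<in> J) (S i)"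
proof -
  have "\<exists>p. fst p \<noteq> 0 \<and> (\<forall>i. p \<in> strictly_on_side (i \<in> J) (S i))" for J
  proof -
    obtain a b where "a \<noteq> 0" and sub: "\<And>i. S i \<subseteq> interior (hside (i \<in> J) a b)"
      using assms[unfolded separable_by_hyperplanes_def, rule_format, of "\<lambda>i. i \<in> J"] by blast
    have "(a, b) \<in> strictly_on_side (i \<in> J) (S i)" for i
      using sub[of i] \<open>a \<noteq> 0\<close>
      by (cases "i \<in> J") (auto simp: strictly_on_side_def hside_def hplus_def hminus_def)
    with \<open>a \<noteq> 0\<close> show ?thesis
      by (intro exI[of _ "(a, b)"]) simp
  qed
  then obtain P where "\<And>J. fst (P J) \<noteq> 0" "\<And>J i. P J \<in> strictly_on_side (i \<in> J) (S i)"
    by metis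
  then show thesis
    by (rule that)
qed

lemma separable_by_hyperplanes_mono:
  assumes "separable_by_hyperplanes S" "\<And>i. T i \<subseteq> S i"
  shows "separable_by_hyperplanes T"
  using assms unfolding separable_by_hyperplanes_def by (metis subset_trans)

lemma continuous_prob_hyperplane_null:
  fixes M :: "'a::euclidean_space measure"
  assumes "continuous_prob M" "(a, b) \<noteq> 0"
  shows "{x. a \<bullet> x = b} \<in> null_sets M"
proof -
  have "negligible {x. a \<bullet> x = b}"
    using assms(2) by (intro negligible_hyperplane) (auto simp: zero_prod_def)
  then have "{x. a \<bullet> x = b} \<in> null_sets lborel"
    by (auto simp: negligible_iff_null_sets null_sets_completion_iff closed_hyperplane)
  then show ?thesis
    using assms(1) unfolding continuous_prob_def absolutely_continuous_def by blast
qed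

lemma isCont_indicator_hplus:
  fixes x :: "'a::euclidean_space"
  assumes "fst c \<bullet> x \<noteq> snd c"
  shows "isCont (\<lambda>p. indicator (hplus (fst p) (snd p)) x :: real) c"
proof -
  have indicator_eq: "indicator (hplus (fst p) (snd p)) x = indicator {p. (x, -1) \<bullet> p \<ge> 0} p" for p
    by (cases p) (simp add: hplus_def indicator_def inner_commute)
  have "frontier {p. (x, -1::real) \<bullet> p \<ge> 0} = {p. (x, -1) \<bullet> p = 0}"
    by (rule frontier_halfspace_ge) (simp add: zero_prod_def)
  then have "c \<notin> frontier {p. (x, -1) \<bullet> p \<ge> 0}"
    using assms by (cases c) (simp add: inner_commute[of x])
  then show ?thesis
    by (simp add: indicator_eq isCont_indicator)
qed

lemma isCont_measure_hplus:
  fixes M :: "'a::euclidean_space measure"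
  assumes cp: "continuous_prob M" and "c \<noteq> 0"
  shows "isCont (\<lambda>p. measure M (hplus (fst p) (snd p))) c"
proof -
  interpret prob_space M
    using cp by (simp add: continuous_prob_def)
  have hplus_sets: "hplus a b \<in> sets M" for a b
    using cp unfolding hplus_def continuous_prob_def by (simp add: borel_closed closed_halfspace_ge)
  have "{x. fst c \<bullet> x = snd c} \<in> null_sets M"
    using continuous_prob_hyperplane_null[OF cp] \<open>c \<noteq> 0\<close> by (cases c) auto
  then have AE_cont: "AE x in M. isCont (\<lambda>p. indicator (hplus (fst p) (snd p)) x :: real) c"
    by (rule AE_not_in[THEN AE_mp]) (simp add: isCont_indicator_hplus)
  show ?thesis
    unfolding continuous_at_sequentially comp_def
  proof (intro allI impI)
    fix X assume X: "X \<longlonglongrightarrow> c"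
    have "(\<lambda>k. \<integral>x. indicator (hplus (fst (X k)) (snd (X k))) x \<partial>M)
        \<longlonglongrightarrow> (\<integral>x. indicator (hplus (fst c) (snd c)) x \<partial>M :: real)"
    proof (rule integral_dominated_convergence[where w = "\<lambda>_. 1"])
      show "AE x in M. (\<lambda>k. indicator (hplus (fst (X k)) (snd (X k))) x :: real)
          \<longlonglongrightarrow> indicator (hplus (fst c) (snd c)) x"
        using AE_cont by eventually_elim (rule isCont_tendsto_compose[OF _ X])
    qed (auto intro: borel_measurable_indicator hplus_sets)
    then show "(\<lambda>k. measure M (hplus (fst (X k)) (snd (X k))))
        \<longlonglongrightarrow> measure M (hplus (fst c) (snd c))"
      by (simp add: hplus_sets)
  qed
qed

lemma measure_le_hplus_if_above:
  fixes M :: "'a::euclidean_space measure"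
  assumes "finite_measure M" "sets M = sets borel" "(a, b) \<in> strictly_on_side True S"
  shows "measure M S \<le> measure M (hplus a b)"
proof (rule finite_measure.finite_measure_mono[OF assms(1)])
  show "S \<subseteq> hplus a b"
    using assms(3) by (auto simp: strictly_on_side_def hplus_def)
  show "hplus a b \<in> sets M"
    unfolding hplus_def assms(2) by (intro borel_closed closed_halfspace_ge)
qed

lemma measure_hplus_le_if_below:
  fixes M :: "'a::euclidean_space measure"
  assumes "prob_space M" "sets M = sets borel" "S \<in> sets borel"
    and "(a, b) \<in> strictly_on_side False S"
  shows "measure M (hplus a b) \<le> 1 - measure M S"
proof -
  interpret prob_space M by (fact assms(1))
  have "hplus a b \<in> sets M"
    unfolding hplus_def assms(2) by (intro borel_closed closed_halfspace_ge)
  moreover have "hplus a b \<inter> S = {}"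
    using assms(4) by (auto simp: strictly_on_side_def hplus_def)
  ultimately have "measure M (hplus a b \<union> S) = measure M (hplus a b) + measure M S"
    using assms(2,3) by (intro finite_measure_Union) auto
  moreover have "measure M (hplus a b \<union> S) \<le> 1"
    by (rule prob_le_1)
  ultimately show ?thesis
    by linarith
qed

lemma exists_cball_measure_gt:
  fixes M :: "'a::euclidean_space measure"
  assumes "finite_measure M" "sets M = sets borel" "S \<in> sets borel" "measure M S > c"
  obtains r where "measure M (S \<inter> cball 0 r) > c"
proof -
  define A where "A k = S \<inter> cball 0 (real k)" for k :: nat
  have "A k \<in> sets M" for k
    unfolding A_def assms(2) using assms(3) by (auto intro: borel_closed)
  moreover have "incseq A"
    by (auto simp: A_def incseq_def)
  moreover have "(\<Union>k. A k) = S"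
  proof
    show "S \<subseteq> (\<Union>k. A k)"
    proof
      fix x assume "x \<in> S"
      moreover obtain k :: nat where "norm x \<le> real k"
        using real_arch_simple by blast
      ultimately show "x \<in> (\<Union>k. A k)"
        by (auto simp: A_def)
    qed
  qed (auto simp: A_def)
  ultimately have "(\<lambda>k. measure M (A k)) \<longlonglongrightarrow> measure M S"
    using finite_measure.finite_Lim_measure_incseq[OF assms(1), of A] by auto
  then have "eventually (\<lambda>k. measure M (A k) > c) sequentially"
    using assms(4) by (rule order_tendstoD)
  then obtain k where "measure M (A k) > c"
    by (auto simp: eventually_sequentially)
  then show thesis
    unfolding A_def by (rule that)
qed

lemma poincare_miranda_cube:
  fixes G :: "real^'n \<Rightarrow> real^'n"
  assumes cont: "continuous_on (cbox (-1) 1) G"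
    and upper: "\<And>t i. t \<in> cbox (-1) 1 \<Longrightarrow> t $ i = 1 \<Longrightarrow> G t $ i \<ge> 0"
    and lower: "\<And>t i. t \<in> cbox (-1) 1 \<Longrightarrow> t $ i = -1 \<Longrightarrow> G t $ i \<le> 0"
  shows "\<exists>t\<in>cbox (-1) 1. G t = 0"
proof -
  txt \<open>At a fixed point of \<open>h\<close> a clamped coordinate \<open>t $ i = \<plusminus>1\<close> forces \<open>G t $ i = 0\<close> by the
    sign conditions, and an unclamped one gives \<open>G t $ i = 0\<close> directly.\<close>
  define h where "h t = (\<chi> i. max (-1) (min 1 (t $ i - G t $ i)))" for t
  have "continuous_on (cbox (-1) 1) h"
    unfolding h_def by (intro continuous_on_vec_lambda continuous_intros continuous_on_component cont)
  moreover have "h \<in> cbox (-1) 1 \<rightarrow> cbox (-1) 1"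
    by (auto simp: h_def mem_box_cart)
  moreover have "cbox (-1) (1::real^'n) \<noteq> {}"
    using mem_box_cart(2)[of 0 "-1" 1] by force
  ultimately obtain t where t: "t \<in> cbox (-1) 1" "h t = t"
    using brouwer[OF compact_cbox convex_box(1)] by blast
  have "G t $ i = 0" for i
  proof -
    have "max (-1) (min 1 (t $ i - G t $ i)) = t $ i"
      using t(2) by (auto simp: h_def vec_eq_iff)
    moreover have "-1 \<le> t $ i" "t $ i \<le> 1"
      using t(1) by (auto simp: mem_box_cart)
    ultimately show ?thesis
      using upper[OF t(1), of i] lower[OF t(1), of i] by (auto simp: max_def min_def split: if_splits)
  qed
  then show ?thesis
    using t(1) by (auto simp: vec_eq_iff)
qed

lemma open_not_subset_differentiable_image_lowdim:
  fixes f :: "'m::euclidean_space \<Rightarrow> 'n::euclidean_space"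
  assumes "DIM('m) < DIM('n)" "f differentiable_on S" "open U" "U \<noteq> {}"
  shows "\<not> U \<subseteq> f ` S"
  using negligible_differentiable_image_lowdim[OF assms(1,2)] open_not_negligible[OF assms(3,4)]
    negligible_subset by blast

definition cube_weight :: "'n::finite set \<Rightarrow> real^'n \<Rightarrow> real" where
  "cube_weight J t = (\<Prod>i\<in>J. (1 + t $ i) / 2) * (\<Prod>i\<in>-J. (1 - t $ i) / 2)"

text \<open>The multilinear map taking the vertex of \<open>[-1,1]\<^sup>n\<close> with coordinate \<open>+1\<close> exactly on \<open>J\<close>
  to \<open>P J\<close>.\<close>

definition cube_interpolation :: "('n::finite set \<Rightarrow> 'a::real_vector) \<Rightarrow> real^'n \<Rightarrow> 'a" where
  "cube_interpolation P t = (\<Sum>J\<in>UNIV. cube_weight J t *\<^sub>R P J)"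

lemma sum_cube_weight: "(\<Sum>J\<in>UNIV. cube_weight J t) = 1"
proof -
  have "(\<Sum>J\<in>UNIV. cube_weight J t) = (\<Prod>i\<in>UNIV. (1 + t $ i) / 2 + (1 - t $ i) / 2)"
    unfolding cube_weight_def Compl_eq_Diff_UNIV by (subst prod_add) simp_all
  also have "\<dots> = 1"
    by (simp add: add_divide_distrib[symmetric])
  finally show ?thesis .
qed

lemma cube_weight_nonneg:
  assumes "t \<in> cbox (-1) 1"
  shows "cube_weight J t \<ge> 0"
proof -
  have "0 \<le> 1 + t $ i \<and> 0 \<le> 1 - t $ i" for i
    using assms[unfolded mem_box_cart, rule_format, of i] by simp
  then show ?thesis
    unfolding cube_weight_def by (simp add: prod_nonneg)
qed

lemma cube_weight_eq_0_at_face: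
  assumes "t $ i = (if s then 1 else -1)" "(i \<in> J) \<noteq> s"
  shows "cube_weight J t = 0"
  using assms by (cases s) (force simp: cube_weight_def)+

lemma cube_interpolation_add_const:
  "cube_interpolation (\<lambda>J. P J + v) t = cube_interpolation P t + v"
  by (simp add: cube_interpolation_def scaleR_right_distrib sum.distrib
      scaleR_sum_left[symmetric] sum_cube_weight)

lemma cube_interpolation_face_mem:
  assumes "convex C" "t \<in> cbox (-1) 1" "t $ i = (if s then 1 else -1)"
    and "\<And>J. (i \<in> J) = s \<Longrightarrow> P J \<in> C"
  shows "cube_interpolation P t \<in> C"
proof -
  let ?F = "{J. (i \<in> J) = s}"
  have "cube_weight J t = 0" if "J \<in> UNIV - ?F" for J
    using cube_weight_eq_0_at_face[OF assms(3)] that by auto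
  then have sums: "(\<Sum>J\<in>UNIV. cube_weight J t *\<^sub>R P J) = (\<Sum>J\<in>?F. cube_weight J t *\<^sub>R P J)"
      "(\<Sum>J\<in>UNIV. cube_weight J t) = (\<Sum>J\<in>?F. cube_weight J t)"
    by (intro sum.mono_neutral_right; simp)+
  then have "(\<Sum>J\<in>?F. cube_weight J t) = 1"
    by (simp add: sum_cube_weight)
  then have "(\<Sum>J\<in>?F. cube_weight J t *\<^sub>R P J) \<in> C"
    using assms(1,4) cube_weight_nonneg[OF assms(2)] by (intro convex_sum) auto
  then show ?thesis
    unfolding cube_interpolation_def sums .
qed

lemma differentiable_prod:
  fixes f :: "'i \<Rightarrow> 'a::real_normed_vector \<Rightarrow> real"
  assumes "\<And>i. i \<in> I \<Longrightarrow> f i differentiable (at x within S)"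
  shows "(\<lambda>x. \<Prod>i\<in>I. f i x) differentiable (at x within S)"
proof -
  obtain D where "\<And>i. i \<in> I \<Longrightarrow> (f i has_derivative D i) (at x within S)"
    using assms unfolding differentiable_def by metis
  then show ?thesis
    unfolding differentiable_def by (blast intro: has_derivative_prod)
qed

lemma differentiable_cube_interpolation:
  fixes P :: "'n::finite set \<Rightarrow> 'a::real_normed_vector"
  shows "cube_interpolation P differentiable (at t within S)"
proof -
  have "(\<lambda>t. t $ i) differentiable (at t within S)" for i
    by (simp add: bounded_linear_imp_differentiable bounded_linear_vec_nth)
  then have "cube_weight J differentiable (at t within S)" for J
    unfolding cube_weight_def
    by (intro differentiable_mult differentiable_prod differentiable_divide differentiable_add
        differentiable_diff differentiable_const) auto
  then show ?thesis
    unfolding cube_interpolation_def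
    by (intro differentiable_sum differentiable_scaleR differentiable_const) auto
qed

lemma exists_nonvanishing_cube_interpolation:
  fixes P :: "'n::finite set \<Rightarrow> 'b::euclidean_space"
  assumes "open U" "0 \<in> U" "CARD('n) < DIM('b)"
  obtains v where "v \<in> U" "\<And>t. t \<in> cbox (-1) 1 \<Longrightarrow> cube_interpolation (\<lambda>J. P J + v) t \<noteq> 0"
proof -
  have "(\<lambda>t. - cube_interpolation P t) differentiable_on cbox (-1) 1"
    unfolding differentiable_on_def by (intro ballI differentiable_minus differentiable_cube_interpolation)
  then have "\<not> U \<subseteq> (\<lambda>t. - cube_interpolation P t) ` cbox (-1) 1"
    using assms by (intro open_not_subset_differentiable_image_lowdim) auto
  then obtain v where v: "v \<in> U" "v \<notin> (\<lambda>t. - cube_interpolation P t) ` cbox (-1) 1"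
    by blast
  show thesis
  proof (rule that[OF v(1)])
    fix t :: "real^'n" assume "t \<in> cbox (-1) 1"
    then have "v \<noteq> - cube_interpolation P t"
      using v(2) by blast
    then show "cube_interpolation (\<lambda>J. P J + v) t \<noteq> 0"
      by (simp add: cube_interpolation_add_const add_eq_0_iff)
  qed
qed

lemma exists_cube_map_strictly_on_sides:
  fixes P :: "'n::finite set \<Rightarrow> 'a::euclidean_space \<times> real" and S :: "'n \<Rightarrow> 'a set"
  assumes "CARD('n) \<le> DIM('a)" and compact: "\<And>i. compact (S i)"
    and P_side: "\<And>J i. P J \<in> strictly_on_side (i \<in> J) (S i)"
  obtains \<psi> :: "real^'n \<Rightarrow> 'a \<times> real"
  where "continuous_on (cbox (-1) 1) \<psi>" "\<And>t. t \<in> cbox (-1) 1 \<Longrightarrow> \<psi> t \<noteq> 0"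
    "\<And>t i s. t \<in> cbox (-1) 1 \<Longrightarrow> t $ i = (if s then 1 else -1) \<Longrightarrow> \<psi> t \<in> strictly_on_side s (S i)"
proof -
  define U where "U = (\<Inter>J. \<Inter>i. (\<lambda>v. P J + v) -` strictly_on_side (i \<in> J) (S i))"
  have "open ((\<lambda>v. P J + v) -` strictly_on_side (i \<in> J) (S i))" for J i
    by (rule open_vimage[OF open_strictly_on_side[OF compact]]) (intro continuous_intros)
  then have "open U"
    unfolding U_def by (intro open_INT finite ballI)
  moreover have "0 \<in> U"
    by (simp add: U_def P_side)
  moreover have "CARD('n) < DIM('a \<times> real)"
    using assms(1) by simp
  ultimately obtain v where "v \<in> U"
    and nonzero: "\<And>t. t \<in> cbox (-1) 1 \<Longrightarrow> cube_interpolation (\<lambda>J. P J + v) t \<noteq> 0"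
    using exists_nonvanishing_cube_interpolation by blast
  have cont: "continuous_on (cbox (-1) 1) (cube_interpolation (\<lambda>J. P J + v))"
    by (intro differentiable_imp_continuous_on differentiable_at_imp_differentiable_on
        differentiable_cube_interpolation)
  have faces: "cube_interpolation (\<lambda>J. P J + v) t \<in> strictly_on_side s (S i)"
    if "t \<in> cbox (-1) 1" "t $ i = (if s then 1 else -1)" for t i s
    using that \<open>v \<in> U\<close> unfolding U_def
    by (intro cube_interpolation_face_mem convex_strictly_on_side) auto
  show thesis
    by (rule that[OF cont nonzero faces])
qed

lemma measure_hplus_zero_normal:
  assumes "continuous_prob M"
  shows "measure M (hplus 0 b) = (if b \<le> 0 then 1 else 0)"
proof -
  have "space M = UNIV"
    using assms unfolding continuous_prob_def by (metis sets_eq_imp_space_eq space_borel)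
  then have "measure M UNIV = 1"
    using assms prob_space.prob_space by (fastforce simp: continuous_prob_def)
  then show ?thesis
    by (simp add: hplus_def)
qed

lemma measure_hplus_eq_if_full:
  fixes M :: "'a::euclidean_space measure"
  assumes "prob_space M" "sets M = sets borel" "S \<in> sets borel" "measure M S = 1"
    and "(a, b) \<in> strictly_on_side s S"
  shows "measure M (hplus a b) = (if s then 1 else 0)"
proof (cases s)
  case True
  then have "1 \<le> measure M (hplus a b)"
    using measure_le_hplus_if_above[of M a b S] assms by (simp add: prob_space.finite_measure)
  with True show ?thesis
    using prob_space.prob_le_1[OF assms(1)] by (simp add: antisym)
next
  case False
  then show ?thesis
    using measure_hplus_le_if_below[OF assms(1-3)] assms(4,5) by (simp add: measure_nonneg antisym)
qed

lemma exists_cube_point_hplus_measures_eq: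
  fixes \<mu> :: "'n::finite \<Rightarrow> 'a::euclidean_space measure" and \<psi> :: "real^'n \<Rightarrow> 'a \<times> real"
  assumes cont: "\<And>i. continuous_prob (\<mu> i)" and S_borel: "\<And>i. S i \<in> sets borel"
    and big: "\<And>i. measure (\<mu> i) (S i) \<ge> max (\<alpha> i) (1 - \<alpha> i)"
    and \<psi>_cont: "continuous_on (cbox (-1) 1) \<psi>"
    and \<psi>_nonzero: "\<And>t. t \<in> cbox (-1) 1 \<Longrightarrow> \<psi> t \<noteq> 0"
    and faces: "\<And>t i s. t \<in> cbox (-1) 1 \<Longrightarrow> t $ i = (if s then 1 else -1) \<Longrightarrow>
      \<psi> t \<in> strictly_on_side s (S i)"
  shows "\<exists>t\<in>cbox (-1) 1. \<forall>i. measure (\<mu> i) (hplus (fst (\<psi> t)) (snd (\<psi> t))) = \<alpha> i"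
proof -
  define m where "m i p = measure (\<mu> i) (hplus (fst p) (snd p))" for i p
  have prob: "prob_space (\<mu> i)" and sets: "sets (\<mu> i) = sets borel" for i
    using cont by (simp_all add: continuous_prob_def)
  have "continuous_on (cbox (-1) 1) (\<lambda>t. m i (\<psi> t))" for i
  proof (rule continuous_on_compose2[OF _ \<psi>_cont])
    show "continuous_on (- {0}) (m i)"
      unfolding m_def by (intro continuous_at_imp_continuous_on ballI isCont_measure_hplus cont) auto
  qed (use \<psi>_nonzero in auto)
  then have "continuous_on (cbox (-1) 1) (\<lambda>t. \<chi> i. m i (\<psi> t) - \<alpha> i)"
    by (intro continuous_on_vec_lambda continuous_intros)
  moreover have "\<alpha> i \<le> m i (\<psi> t)" if "t \<in> cbox (-1) 1" "t $ i = 1" for t i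
  proof -
    have "(fst (\<psi> t), snd (\<psi> t)) \<in> strictly_on_side True (S i)"
      using faces[OF that(1), of i True] that(2) by simp
    then have "measure (\<mu> i) (S i) \<le> m i (\<psi> t)"
      unfolding m_def by (rule measure_le_hplus_if_above[OF prob_space.finite_measure[OF prob] sets])
    then show ?thesis
      using big[of i] by linarith
  qed
  moreover have "m i (\<psi> t) \<le> \<alpha> i" if "t \<in> cbox (-1) 1" "t $ i = -1" for t i
  proof -
    have "(fst (\<psi> t), snd (\<psi> t)) \<in> strictly_on_side False (S i)"
      using faces[OF that(1), of i False] that(2) by simp
    then have "m i (\<psi> t) \<le> 1 - measure (\<mu> i) (S i)"
      unfolding m_def by (rule measure_hplus_le_if_below[OF prob sets S_borel])
    then show ?thesis
      using big[of i] by linarith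
  qed
  ultimately have "\<exists>t\<in>cbox (-1) 1. (\<chi> i. m i (\<psi> t) - \<alpha> i) = 0"
    by (intro poincare_miranda_cube) auto
  then show ?thesis
    by (auto simp: m_def vec_eq_iff)
qed

lemma hyperplane_with_prescribed_measures_compact:
  fixes \<mu> :: "'n::finite \<Rightarrow> (real^'n) measure" and S :: "'n \<Rightarrow> (real^'n) set"
  assumes cont: "\<And>i. continuous_prob (\<mu> i)" and compact: "\<And>i. compact (S i)"
    and sep: "separable_by_hyperplanes S"
    and big: "\<And>i. measure (\<mu> i) (S i) \<ge> max (\<alpha> i) (1 - \<alpha> i)"
  shows "\<exists>a b. a \<noteq> 0 \<and> (\<forall>i. measure (\<mu> i) (hplus a b) = \<alpha> i)"
proof -
  have S_borel: "S i \<in> sets borel" for i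
    using compact by (simp add: borel_compact)
  obtain P where P_normal: "\<And>J. fst (P J) \<noteq> 0"
    and P_side: "\<And>J i. P J \<in> strictly_on_side (i \<in> J) (S i)"
    using separable_by_hyperplanesE[OF sep] by metis
  obtain \<psi> :: "real^'n \<Rightarrow> (real^'n) \<times> real"
    where "continuous_on (cbox (-1) 1) \<psi>" "\<And>t. t \<in> cbox (-1) 1 \<Longrightarrow> \<psi> t \<noteq> 0"
      "\<And>t i s. t \<in> cbox (-1) 1 \<Longrightarrow> t $ i = (if s then 1 else -1) \<Longrightarrow> \<psi> t \<in> strictly_on_side s (S i)"
    by (rule exists_cube_map_strictly_on_sides[OF _ compact P_side]) simp_all
  then obtain t where meas: "\<And>i. measure (\<mu> i) (hplus (fst (\<psi> t)) (snd (\<psi> t))) = \<alpha> i"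
    using exists_cube_point_hplus_measures_eq[where S = S, OF cont S_borel big] by blast
  show ?thesis
  proof (cases "fst (\<psi> t) = 0")
    case False
    with meas show ?thesis by blast
  next
    case True
    define s where "s = (snd (\<psi> t) \<le> 0)"
    have \<alpha>: "\<alpha> i = (if s then 1 else 0)" for i
      using meas[of i] measure_hplus_zero_normal[OF cont] by (simp add: True s_def)
    have "measure (\<mu> i) (S i) = 1" for i
      using big[of i] \<alpha>[of i] cont[of i] prob_space.prob_le_1[of "\<mu> i" "S i"]
      by (simp add: continuous_prob_def split: if_splits)
    then have "measure (\<mu> i) (hplus (fst (P {i. s})) (snd (P {i. s}))) = \<alpha> i" for i
      using measure_hplus_eq_if_full[of "\<mu> i" "S i"] cont[of i] S_borel P_side[of "{i. s}" i] \<alpha>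
      by (simp add: continuous_prob_def)
    with P_normal show ?thesis by blast
  qed
qed

theorem mainTheorem5:
  fixes \<mu> :: "'n::finite \<Rightarrow> (real^'n) measure"
    and \<alpha> :: "'n \<Rightarrow> real"
    and S :: "'n \<Rightarrow> (real^'n) set"
  assumes cont: "\<And>i. continuous_prob (\<mu> i)"
    and alpha: "\<And>i. 0 \<le> \<alpha> i \<and> \<alpha> i \<le> 1"
    and cases:
      "((\<forall>i. compact (S i)) \<and> separable_by_hyperplanes S \<and>
          (\<forall>i. measure (\<mu> i) (S i) \<ge> max (\<alpha> i) (1 - \<alpha> i)))
       \<or> ((\<forall>i. closed (S i)) \<and> separable_by_hyperplanes S \<and>
          (\<forall>i. measure (\<mu> i) (S i) > max (\<alpha> i) (1 - \<alpha> i)))"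
  shows "\<exists>a b. a \<noteq> 0 \<and> (\<forall>i. measure (\<mu> i) (hplus a b) = \<alpha> i)"
  using cases
proof (elim disjE conjE)
  assume "\<forall>i. compact (S i)" "separable_by_hyperplanes S"
    "\<forall>i. measure (\<mu> i) (S i) \<ge> max (\<alpha> i) (1 - \<alpha> i)"
  then show ?thesis
    using hyperplane_with_prescribed_measures_compact[OF cont, of S \<alpha>] by simp
next
  assume closed: "\<forall>i. closed (S i)" and sep: "separable_by_hyperplanes S"
    and big: "\<forall>i. measure (\<mu> i) (S i) > max (\<alpha> i) (1 - \<alpha> i)"
  have "\<exists>r. measure (\<mu> i) (S i \<inter> cball 0 r) > max (\<alpha> i) (1 - \<alpha> i)" for i
  proof -
    have "finite_measure (\<mu> i)" "sets (\<mu> i) = sets borel"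
      using cont[of i] by (simp_all add: continuous_prob_def prob_space.finite_measure)
    moreover have "S i \<in> sets borel"
      using closed by (simp add: borel_closed)
    ultimately obtain r where "measure (\<mu> i) (S i \<inter> cball 0 r) > max (\<alpha> i) (1 - \<alpha> i)"
      using big exists_cball_measure_gt by blast
    then show ?thesis ..
  qed
  then obtain r where r: "\<And>i. measure (\<mu> i) (S i \<inter> cball 0 (r i)) > max (\<alpha> i) (1 - \<alpha> i)"
    by metis
  show ?thesis
  proof (rule hyperplane_with_prescribed_measures_compact[OF cont])
    show "compact (S i \<inter> cball 0 (r i))" for i
      using closed by (simp add: closed_Int_compact)
    show "separable_by_hyperplanes (\<lambda>i. S i \<inter> cball 0 (r i))"
      using sep by (rule separable_by_hyperplanes_mono) auto
    show "max (\<alpha> i) (1 - \<alpha> i) \<le> measure (\<mu> i) (S i \<inter> cball 0 (r i))" for i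
      using r[of i] by linarith
  qed
qed

end
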